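(* For every finite point set $S$ in the plane, the (unordered) pairs of points of $S$ can be $2$-colored such that every axis-parallel rectangle that contains at least $3$ points of $S$ contains pairs of points of $S$ of both colors.
   Context: An axis-parallel rectangle is a set $[a,b]\times[c,d]$. A rectangle contains a pair if it contains both of its points. *)

theory Defs
  imports Main "HOL.Real"
begin

definition rect :: "real \<Rightarrow> real \<Rightarrow> real \<Rightarrow> real \<Rightarrow> (real \<times> real) set" where
  "rect a b c d = {a..b} \<times> {c..d}"

end

theory Submission
  imports Defs "HOL-Library.Product_Lexorder"
begin

(* Break ties by ordering the points lexicographically by (x, y) and by (y, x); call a pair
   concordant if the two orders agree on it, and say that s lies between p and q if it lies
   strictly between them in both orders.  Colour a pair {p, q} by whether "no point of S lies
   between p and q" coincides with "p, q concordant".  Betweenness is transitive and preserves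
   concordance, so inside a rectangle any pair can be shrunk to a pair of the same concordance
   with nothing between it (every point between two points of a rectangle is again in the
   rectangle); and if all pairs in the rectangle have the same concordance, then of any three
   of its points one lies between the other two. *)

locale two_rankings =
  fixes rk1 rk2 :: "'a \<Rightarrow> 'b::linorder"
  assumes inj_rk1: "inj rk1" and inj_rk2: "inj rk2"
begin

definition concordant :: "'a \<Rightarrow> 'a \<Rightarrow> bool" where
  "concordant p q \<longleftrightarrow> (rk1 p < rk1 q \<longleftrightarrow> rk2 p < rk2 q)"

definition between :: "'a \<Rightarrow> 'a \<Rightarrow> 'a \<Rightarrow> bool" where
  "between s p q \<longleftrightarrow>
     (rk1 p < rk1 s \<and> rk1 s < rk1 q \<or> rk1 q < rk1 s \<and> rk1 s < rk1 p) \<and>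
     (rk2 p < rk2 s \<and> rk2 s < rk2 q \<or> rk2 q < rk2 s \<and> rk2 s < rk2 p)"

definition colour :: "'a set \<Rightarrow> 'a \<Rightarrow> 'a \<Rightarrow> bool" where
  "colour S p q \<longleftrightarrow> ((\<forall>s\<in>S. \<not> between s p q) \<longleftrightarrow> concordant p q)"

definition pair_colouring :: "'a set \<Rightarrow> 'a set \<Rightarrow> bool" where
  "pair_colouring S X \<longleftrightarrow> (\<exists>p q. X = {p, q} \<and> p \<noteq> q \<and> colour S p q)"

lemma rk_neq_iff: "rk1 p \<noteq> rk1 q \<longleftrightarrow> p \<noteq> q" "rk2 p \<noteq> rk2 q \<longleftrightarrow> p \<noteq> q"
  using inj_rk1 inj_rk2 by (auto dest: injD)

lemma concordant_commute: "p \<noteq> q \<Longrightarrow> concordant q p = concordant p q"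
  using rk_neq_iff[of p q] unfolding concordant_def by auto

lemma between_commute: "between s q p = between s p q"
  unfolding between_def by blast

lemma between_neq: "between s p q \<Longrightarrow> s \<noteq> p \<and> s \<noteq> q"
  unfolding between_def by auto

lemma between_same: "\<not> between s p p"
  unfolding between_def by auto

lemma between_trans: "between s p q \<Longrightarrow> between t p s \<Longrightarrow> between t p q"
  unfolding between_def by auto

lemma concordant_between: "between s p q \<Longrightarrow> concordant p s = concordant p q"
  unfolding between_def concordant_def by auto

lemma colour_commute: "p \<noteq> q \<Longrightarrow> colour S q p = colour S p q"
  unfolding colour_def using between_commute concordant_commute by simp

lemma pair_colouring_doubleton: "p \<noteq> q \<Longrightarrow> pair_colouring S {p, q} = colour S p q"
  unfolding pair_colouring_def using colour_commute by (metis doubleton_eq_iff)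

lemma between_if_rk1_between:
  assumes "rk1 p < rk1 s" "rk1 s < rk1 q" "concordant p s = concordant s q"
  shows "between s p q"
  using assms rk_neq_iff[of p s] rk_neq_iff[of s q] unfolding between_def concordant_def
  by (auto simp: not_less dual_order.strict_iff_order)

lemma between_if_concordance_uniform:
  assumes fin: "finite T" and card: "3 \<le> card T"
    and uniform: "\<forall>x\<in>T. \<forall>y\<in>T. x \<noteq> y \<longrightarrow> concordant x y = \<kappa>"
  shows "\<exists>p\<in>T. \<exists>q\<in>T. \<exists>s\<in>T. between s p q"
proof -
  have "T \<noteq> {}" using card by auto
  then have "Min (rk1 ` T) \<in> rk1 ` T" "Max (rk1 ` T) \<in> rk1 ` T"
    using fin by simp_all
  then obtain p q where p: "p \<in> T" "rk1 p = Min (rk1 ` T)" and q: "q \<in> T" "rk1 q = Max (rk1 ` T)"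
    by (metis imageE)
  have "card {p, q} \<le> 2"
    by (cases "p = q") simp_all
  then have "\<not> T \<subseteq> {p, q}"
    using card card_mono[of "{p, q}" T] by fastforce
  then obtain s where s: "s \<in> T" "s \<noteq> p" "s \<noteq> q"
    by blast
  have "rk1 p \<le> rk1 s" "rk1 s \<le> rk1 q"
    using fin s(1) p(2) q(2) by simp_all
  then have "rk1 p < rk1 s" "rk1 s < rk1 q"
    using s rk_neq_iff by (simp_all add: order.strict_iff_order)
  moreover have "concordant p s = concordant s q"
    using uniform p(1) q(1) s by simp
  ultimately show ?thesis
    using between_if_rk1_between p(1) q(1) s(1) by blast
qed

lemma exists_pair_with_nothing_between:
  assumes fin: "finite T" and "p \<in> T" "q \<in> T" "p \<noteq> q"
  shows "\<exists>p'\<in>T. \<exists>q'\<in>T. p' \<noteq> q' \<and> concordant p' q' = concordant p q \<and>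
           (\<forall>s\<in>T. \<not> between s p' q')"
  using assms(2-4)
proof (induction "card {s\<in>T. between s p q}" arbitrary: q rule: less_induct)
  case less
  show ?case
  proof (cases "\<exists>s\<in>T. between s p q")
    case False
    with less.prems show ?thesis by blast
  next
    case True
    then obtain s where s: "s \<in> T" "between s p q" by blast
    have "{t\<in>T. between t p s} \<subseteq> {t\<in>T. between t p q}"
      using between_trans[OF s(2)] by blast
    moreover have "s \<notin> {t\<in>T. between t p s}"
      using between_neq by blast
    ultimately have "card {t\<in>T. between t p s} < card {t\<in>T. between t p q}"
      using fin s by (intro psubset_card_mono) auto
    moreover have "p \<noteq> s"
      using s(2) between_neq by blast
    ultimately have "\<exists>p'\<in>T. \<exists>q'\<in>T. p' \<noteq> q' \<and> concordant p' q' = concordant p s \<and>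
                       (\<forall>t\<in>T. \<not> between t p' q')"
      using less.hyps less.prems(1) s(1) by blast
    then show ?thesis
      using concordant_between[OF s(2)] by simp
  qed
qed

lemma colour_attains_both:
  assumes fin: "finite T" and card: "3 \<le> card T"
  shows "\<exists>p\<in>T. \<exists>q\<in>T. p \<noteq> q \<and> colour T p q = c"
proof (cases "\<exists>p\<in>T. \<exists>q\<in>T. p \<noteq> q \<and> concordant p q = c")
  case True
  then obtain p q where "p \<in> T" "q \<in> T" "p \<noteq> q" "concordant p q = c"
    by blast
  then obtain p' q' where "p' \<in> T" "q' \<in> T" "p' \<noteq> q'" "concordant p' q' = c"
    and "\<forall>s\<in>T. \<not> between s p' q'"
    using exists_pair_with_nothing_between[OF fin] by metis
  then show ?thesis
    unfolding colour_def by blast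
next
  case False
  then have "\<forall>x\<in>T. \<forall>y\<in>T. x \<noteq> y \<longrightarrow> concordant x y = (\<not> c)"
    by blast
  then obtain p q s where "p \<in> T" "q \<in> T" "s \<in> T" "between s p q"
    using between_if_concordance_uniform[OF fin card] by blast
  moreover have "p \<noteq> q"
    using \<open>between s p q\<close> between_same by blast
  ultimately show ?thesis
    using False unfolding colour_def by blast
qed

lemma pair_colouring_attains_both:
  assumes "finite S" "T \<subseteq> S" "3 \<le> card T"
    and convex: "\<And>p q s. p \<in> T \<Longrightarrow> q \<in> T \<Longrightarrow> s \<in> S \<Longrightarrow> between s p q \<Longrightarrow> s \<in> T"
  shows "\<exists>p\<in>T. \<exists>q\<in>T. p \<noteq> q \<and> pair_colouring S {p, q} = c"
proof -
  obtain p q where pq: "p \<in> T" "q \<in> T" "p \<noteq> q" "colour T p q = c"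
    using colour_attains_both[of T c] assms(1-3) finite_subset by blast
  have "colour S p q = colour T p q"
    using assms(2) convex[OF pq(1,2)] unfolding colour_def by blast
  with pq show ?thesis
    using pair_colouring_doubleton by metis
qed

end

global_interpretation plane: two_rankings "id :: real \<times> real \<Rightarrow> real \<times> real" prod.swap
  by unfold_locales simp_all

lemma fst_mono_lexorder: "(x :: 'a::order \<times> 'b::ord) < y \<Longrightarrow> fst x \<le> fst y"
  by (auto simp: less_prod_def')

lemma atLeastAtMost_between:
  fixes x y z :: "'a::order"
  assumes "x \<in> {a..b}" "y \<in> {a..b}" "x \<le> z \<and> z \<le> y \<or> y \<le> z \<and> z \<le> x"
  shows "z \<in> {a..b}"
  using assms by (meson atLeastAtMost_iff order_trans)

lemma plane_between_rect:
  assumes p: "p \<in> rect a b c d" and q: "q \<in> rect a b c d" and s: "plane.between s p q"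
  shows "s \<in> rect a b c d"
proof -
  have "p < s \<and> s < q \<or> q < s \<and> s < p"
    and "prod.swap p < prod.swap s \<and> prod.swap s < prod.swap q \<or>
         prod.swap q < prod.swap s \<and> prod.swap s < prod.swap p"
    using s unfolding plane.between_def by simp_all
  then have "fst p \<le> fst s \<and> fst s \<le> fst q \<or> fst q \<le> fst s \<and> fst s \<le> fst p"
    and "snd p \<le> snd s \<and> snd s \<le> snd q \<or> snd q \<le> snd s \<and> snd s \<le> snd p"
    using fst_mono_lexorder by (metis fst_swap)+
  with p q show ?thesis
    unfolding rect_def mem_Times_iff by (blast intro: atLeastAtMost_between)
qed

theorem theorem10:
  fixes S :: "(real \<times> real) set"
  assumes "finite S"
  shows "\<exists>col :: (real \<times> real) set \<Rightarrow> bool.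
           \<forall>a b c d. card (S \<inter> rect a b c d) \<ge> 3 \<longrightarrow>
             (\<exists>p \<in> S \<inter> rect a b c d. \<exists>q \<in> S \<inter> rect a b c d. p \<noteq> q \<and> col {p, q}) \<and>
             (\<exists>p \<in> S \<inter> rect a b c d. \<exists>q \<in> S \<inter> rect a b c d. p \<noteq> q \<and> \<not> col {p, q})"
proof (intro exI allI impI)
  fix a b c d
  assume "3 \<le> card (S \<inter> rect a b c d)"
  then have "\<exists>p \<in> S \<inter> rect a b c d. \<exists>q \<in> S \<inter> rect a b c d.
               p \<noteq> q \<and> plane.pair_colouring S {p, q} = t" for t
    by (intro plane.pair_colouring_attains_both[OF assms]) (auto intro: plane_between_rect)
  from this[of True] this[of False]
  show "(\<exists>p \<in> S \<inter> rect a b c d. \<exists>q \<in> S \<inter> rect a b c d. p \<noteq> q \<and> plane.pair_colouring S {p, q}) \<and>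
        (\<exists>p \<in> S \<inter> rect a b c d. \<exists>q \<in> S \<inter> rect a b c d. p \<noteq> q \<and> \<not> plane.pair_colouring S {p, q})"
    by simp
qed

end
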